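(* Let $f$ be a stable update function. For every $\delta>0$ there exists $0<c_0<1$ such that the following holds: if $\vec u_i,\vec u_j\in\mathbb S^{d-1}$ have effective angle $\gamma=\gamma(\vec u_i,\vec u_j)\le\frac{\pi}{2}-\delta$, and $\vec u_i'=\vec w/\|\vec w\|$ with $\vec w=\vec u_i+f(\langle\vec u_i,\vec u_j\rangle)\vec u_j$, then the new effective angle $\gamma'=\gamma(\vec u_i',\vec u_j)$ satisfies $\gamma'\le c_0\gamma$.
   Context: $f:[-1,1]\to\mathbb R$ is stable if continuous and $\operatorname{sign}f(A)=\operatorname{sign}A$ for all $A\in[-1,1]$. The angle is $\alpha(\vec u,\vec v)=\arccos\langle\vec u,\vec v\rangle\in[0,\pi]$ and the effective angle is $\gamma(\vec u,\vec v)=\min(\alpha(\vec u,\vec v),\pi-\alpha(\vec u,\vec v))$. *)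

theory Defs
  imports "HOL-Analysis.Analysis"
begin

definition stable :: "(real \<Rightarrow> real) \<Rightarrow> bool" where
  "stable f \<longleftrightarrow> continuous_on {-1..1} f \<and> (\<forall>A\<in>{-1..1}. sgn (f A) = sgn A)"

definition vangle :: "'a::real_inner \<Rightarrow> 'a \<Rightarrow> real" where
  "vangle u v = arccos (inner u v)"

definition eff_angle :: "'a::real_inner \<Rightarrow> 'a \<Rightarrow> real" where
  "eff_angle u v = min (vangle u v) (pi - vangle u v)"

end

theory Submission
  imports Defs
begin

(* Write A = <u_i, u_j> and b = f A. The component of w = u_i + b u_j orthogonal to u_j is
   that of u_i, so sin gamma' = sin gamma / |w|. Stability gives A b >= 0, hence
   |w|^2 = 1 + 2 A b + b^2 >= 1 + b^2; and gamma <= pi/2 - delta keeps |A| away from 0, where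
   by continuity and compactness |f A| >= m > 0. Thus sin gamma' <= sin gamma / K with
   K = sqrt (1 + m^2) > 1, and concavity of sin on [0, pi] turns this into gamma' <= gamma / K. *)

lemma divide_le_self:
  fixes K x :: real
  assumes "1 \<le> K" "0 \<le> x"
  shows "x / K \<le> x"
  using assms mult_left_mono[of 1 K x] by (simp add: divide_le_eq)

lemma sin_le_mult_sin_divide:
  fixes K x :: real
  assumes K: "1 \<le> K" and x: "0 \<le> x" "x \<le> pi"
  shows "sin x \<le> K * sin (x / K)"
proof -
  let ?g = "\<lambda>x. K * sin (x / K) - sin x"
  have deriv: "(?g has_real_derivative (cos (t / K) - cos t)) (at t)" for t
  proof -
    have "(?g has_real_derivative (K * (cos (t / K) * (1 / K)) - cos t)) (at t)"
      by (auto intro!: derivative_eq_intros)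
    then show ?thesis using K by simp
  qed
  have "?g 0 \<le> ?g x"
  proof (rule DERIV_nonneg_imp_nondecreasing[OF x(1)])
    fix t assume t: "0 \<le> t" "t \<le> x"
    have "cos t \<le> cos (t / K)"
      using t x K divide_le_self[OF K t(1)] by (intro cos_monotone_0_pi_le) auto
    then show "\<exists>y. (?g has_real_derivative y) (at t) \<and> 0 \<le> y"
      using deriv[of t] by auto
  qed
  then show ?thesis by simp
qed

lemma le_divide_of_sin_le_sin_divide:
  fixes g g' K :: real
  assumes K: "1 \<le> K" and g: "0 \<le> g" "g \<le> pi / 2" and g': "0 \<le> g'" "g' \<le> pi / 2"
    and sin_le: "sin g' \<le> sin g / K"
  shows "g' \<le> g / K"
proof -
  have "sin g \<le> K * sin (g / K)"
    using sin_le_mult_sin_divide[OF K, of g] g by simp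
  with K have "sin g / K \<le> sin (g / K)"
    by (simp add: divide_le_eq mult.commute)
  with sin_le have "sin g' \<le> sin (g / K)" by linarith
  moreover have "0 \<le> g / K" using g K by simp
  ultimately show ?thesis
    using g g' divide_le_self[OF K g(1)] sin_mono_le_eq[of g' "g / K"] by linarith
qed

lemma abs_inner_le_1:
  fixes u v :: "'a::real_inner"
  assumes "norm u = 1" "norm v = 1"
  shows "\<bar>inner u v\<bar> \<le> 1"
  using Cauchy_Schwarz_ineq2[of u v] assms by simp

lemma eff_angle_eq_arccos_abs:
  fixes u v :: "'a::real_inner"
  assumes "\<bar>inner u v\<bar> \<le> 1"
  shows "eff_angle u v = arccos \<bar>inner u v\<bar>"
proof -
  let ?A = "inner u v"
  have "arccos (- ?A) = pi - arccos ?A" using arccos_minus_abs assms by blast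
  moreover have "?A \<ge> 0 \<Longrightarrow> arccos ?A \<le> arccos (- ?A)"
    and "?A < 0 \<Longrightarrow> arccos (- ?A) \<le> arccos ?A"
    using assms by (subst arccos_le_mono; simp)+
  ultimately show ?thesis
    by (cases "?A \<ge> 0") (simp_all add: eff_angle_def vangle_def min_def)
qed

lemma eff_angle_bounds:
  fixes u v :: "'a::real_inner"
  assumes "\<bar>inner u v\<bar> \<le> 1"
  shows "0 \<le> eff_angle u v" "eff_angle u v \<le> pi / 2"
  using assms arccos_lbound[of "\<bar>inner u v\<bar>"] arccos_le_pi2[of "\<bar>inner u v\<bar>"]
  by (simp_all add: eff_angle_eq_arccos_abs)

lemma sin_eff_angle:
  fixes u v :: "'a::real_inner"
  assumes "\<bar>inner u v\<bar> \<le> 1"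
  shows "sin (eff_angle u v) = sqrt (1 - (inner u v)\<^sup>2)"
  using assms by (simp add: eff_angle_eq_arccos_abs sin_arccos)

lemma abs_inner_ge_sin_of_eff_angle_le:
  fixes u v :: "'a::real_inner" and d :: real
  assumes "\<bar>inner u v\<bar> \<le> 1" and d: "0 \<le> d" "d \<le> pi / 2"
    and "eff_angle u v \<le> pi / 2 - d"
  shows "sin d \<le> \<bar>inner u v\<bar>"
proof -
  have "cos (pi / 2 - d) \<le> cos (eff_angle u v)"
    using assms eff_angle_bounds[OF assms(1)] by (intro cos_monotone_0_pi_le) auto
  then show ?thesis
    using assms(1) by (simp add: cos_diff eff_angle_eq_arccos_abs)
qed

lemma norm_add_scaleR_unit_power2:
  fixes u v :: "'a::real_inner"
  assumes "norm u = 1" "norm v = 1"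
  shows "(norm (u + b *\<^sub>R v))\<^sup>2 = 1 + 2 * b * inner u v + b\<^sup>2"
proof -
  have "(norm (u + b *\<^sub>R v))\<^sup>2 = inner (u + b *\<^sub>R v) (u + b *\<^sub>R v)"
    by (simp add: power2_norm_eq_inner)
  also have "\<dots> = inner u u + 2 * b * inner u v + b\<^sup>2 * inner v v"
    by (simp add: inner_add_left inner_add_right inner_commute power2_eq_square algebra_simps)
  finally have "(norm (u + b *\<^sub>R v))\<^sup>2 = inner u u + 2 * b * inner u v + b\<^sup>2 * inner v v" .
  moreover have "inner u u = 1" "inner v v = 1"
    using assms by (simp_all add: power2_norm_eq_inner[symmetric])
  ultimately show ?thesis by simp
qed

lemma eff_angle_normalize_add_scaleR_le:
  fixes u v :: "'a::real_inner" and b K :: real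
  assumes u: "norm u = 1" and v: "norm v = 1"
    and sign: "inner u v * b \<ge> 0" and K: "1 \<le> K" and Kb: "K\<^sup>2 \<le> 1 + b\<^sup>2"
  shows "eff_angle ((u + b *\<^sub>R v) /\<^sub>R norm (u + b *\<^sub>R v)) v \<le> eff_angle u v / K"
proof -
  define A where "A = inner u v"
  define w where "w = u + b *\<^sub>R v"
  have A1: "\<bar>A\<bar> \<le> 1" unfolding A_def using abs_inner_le_1[OF u v] .
  have w2: "(norm w)\<^sup>2 = 1 + 2 * b * A + b\<^sup>2"
    unfolding w_def A_def using norm_add_scaleR_unit_power2[OF u v] .
  moreover have "0 \<le> 2 * b * A" using sign by (simp add: A_def mult.commute)
  ultimately have "K\<^sup>2 \<le> (norm w)\<^sup>2" using Kb by linarith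
  then have Kw: "K \<le> norm w" by (rule power2_le_imp_le) simp
  with K have w_pos: "norm w > 0" by linarith
  have inner_w: "inner (w /\<^sub>R norm w) v = (A + b) / norm w"
    using v unfolding w_def A_def
    by (simp add: inner_add_left power2_norm_eq_inner[symmetric] divide_inverse mult.commute)
  have w1: "\<bar>inner (w /\<^sub>R norm w) v\<bar> \<le> 1"
    using abs_inner_le_1[of "w /\<^sub>R norm w" v] v w_pos by simp
  have "1 - ((A + b) / norm w)\<^sup>2 = ((norm w)\<^sup>2 - (A + b)\<^sup>2) / (norm w)\<^sup>2"
    using w_pos by (simp add: power_divide field_simps)
  also have "(norm w)\<^sup>2 - (A + b)\<^sup>2 = 1 - A\<^sup>2"
    using w2 by (simp add: power2_eq_square algebra_simps)
  finally have "1 - ((A + b) / norm w)\<^sup>2 = (1 - A\<^sup>2) / (norm w)\<^sup>2" .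
  then have "sin (eff_angle (w /\<^sub>R norm w) v) = sqrt ((1 - A\<^sup>2) / (norm w)\<^sup>2)"
    by (simp only: sin_eff_angle[OF w1] inner_w)
  also have "\<dots> = sin (eff_angle u v) / norm w"
    using w_pos by (simp add: sin_eff_angle[OF abs_inner_le_1[OF u v]] real_sqrt_divide A_def)
  also have "\<dots> \<le> sin (eff_angle u v) / K"
    using Kw K eff_angle_bounds[of u v] A1 sin_ge_zero[of "eff_angle u v"]
    by (intro divide_left_mono) (auto simp: A_def intro!: mult_pos_pos)
  finally show ?thesis
    using le_divide_of_sin_le_sin_divide[OF K] eff_angle_bounds[OF w1] A1
      eff_angle_bounds[of u v] unfolding w_def A_def by blast
qed

lemma stable_mult_nonneg:
  assumes "stable f" "A \<in> {-1..1}"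
  shows "A * f A \<ge> 0"
proof -
  have "sgn (f A) = sgn A" using assms unfolding stable_def by blast
  then show ?thesis by (auto simp: sgn_if zero_le_mult_iff split: if_splits)
qed

lemma stable_abs_bounded_below:
  assumes "stable f" and e: "0 < e"
  obtains m where "m > 0" "\<And>A. A \<in> {-1..1} \<Longrightarrow> e \<le> \<bar>A\<bar> \<Longrightarrow> m \<le> \<bar>f A\<bar>"
proof (cases "e \<le> 1")
  case True
  define S where "S = {-1..-e} \<union> {e..(1::real)}"
  have S_sub: "S \<subseteq> {-1..1}" unfolding S_def using e by auto
  have "continuous_on S (\<lambda>x. \<bar>f x\<bar>)"
    using assms(1) unfolding stable_def by (intro continuous_on_rabs continuous_on_subset[OF _ S_sub]) blast
  moreover have "compact S" unfolding S_def by (intro compact_Un compact_Icc)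
  moreover have "S \<noteq> {}" unfolding S_def using True by auto
  ultimately obtain x0 where x0: "x0 \<in> S" "\<And>y. y \<in> S \<Longrightarrow> \<bar>f x0\<bar> \<le> \<bar>f y\<bar>"
    using continuous_attains_inf by metis
  have "x0 \<noteq> 0" using x0(1) e unfolding S_def by auto
  moreover have "sgn (f x0) = sgn x0"
    using assms(1) x0(1) S_sub unfolding stable_def by blast
  ultimately have "\<bar>f x0\<bar> > 0" by (auto simp: sgn_0_0)
  moreover have "\<bar>f x0\<bar> \<le> \<bar>f A\<bar>" if "A \<in> {-1..1}" "e \<le> \<bar>A\<bar>" for A
  proof (rule x0(2))
    show "A \<in> S" using that unfolding S_def by (cases "A \<ge> 0") auto
  qed
  ultimately show ?thesis using that by blast
next
  case False
  then have "\<bar>A\<bar> < e" if "A \<in> {-1..1}" for A using that by auto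
  then show ?thesis using that[of 1] by force
qed

theorem mainTheorem19:
  fixes f :: "real \<Rightarrow> real" and \<delta> :: real
  assumes "stable f" and "\<delta> > 0"
  shows "\<exists>c0. 0 < c0 \<and> c0 < 1 \<and>
    (\<forall>(ui::'a::euclidean_space) uj. norm ui = 1 \<longrightarrow> norm uj = 1 \<longrightarrow>
       eff_angle ui uj \<le> pi / 2 - \<delta> \<longrightarrow>
       (let w = ui + f (inner ui uj) *\<^sub>R uj in
        eff_angle (w /\<^sub>R norm w) uj \<le> c0 * eff_angle ui uj))"
proof -
  define d where "d = min \<delta> (pi / 2)"
  have d: "0 < d" "d \<le> pi / 2" "d \<le> \<delta>" using assms(2) unfolding d_def by auto
  obtain m where m: "m > 0" "\<And>A. A \<in> {-1..1} \<Longrightarrow> sin d \<le> \<bar>A\<bar> \<Longrightarrow> m \<le> \<bar>f A\<bar>"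
    using stable_abs_bounded_below[OF assms(1)] d sin_gt_zero[of d] by auto
  define K where "K = sqrt (1 + m\<^sup>2)"
  have K: "K > 1" unfolding K_def using m(1) by (simp add: real_less_rsqrt)
  show ?thesis
  proof (intro exI[of _ "1 / K"] conjI allI impI)
    fix ui uj :: 'a
    assume ui: "norm ui = 1" and uj: "norm uj = 1" and small: "eff_angle ui uj \<le> pi / 2 - \<delta>"
    define A where "A = inner ui uj"
    have A1: "A \<in> {-1..1}" using abs_inner_le_1[OF ui uj] unfolding A_def by auto
    have "sin d \<le> \<bar>A\<bar>"
      using abs_inner_ge_sin_of_eff_angle_le[OF abs_inner_le_1[OF ui uj]] small d
      unfolding A_def by simp
    then have "m\<^sup>2 \<le> (f A)\<^sup>2" using m A1 by (metis abs_le_square_iff abs_of_pos)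
    then have "K\<^sup>2 \<le> 1 + (f A)\<^sup>2" unfolding K_def by simp
    then show "let w = ui + f (inner ui uj) *\<^sub>R uj in
        eff_angle (w /\<^sub>R norm w) uj \<le> 1 / K * eff_angle ui uj"
      using eff_angle_normalize_add_scaleR_le[OF ui uj _ _ \<open>K\<^sup>2 \<le> 1 + (f A)\<^sup>2\<close>]
        stable_mult_nonneg[OF assms(1) A1] K
      unfolding A_def Let_def by simp
  qed (use K in auto)
qed

end
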